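(* Let $f\in\mathbb{R}[z_1,\dots,z_n]$ be homogeneous. Then the hyperbolicity cones of $f$ are exactly the connected components of $\mathcal{I}(f)^{\mathsf c}=\mathbb{R}^n\setminus\mathcal{I}(f)$.
   Context: For $f\in\mathbb{C}[z_1,\dots,z_n]$, $\mathcal{V}(f)\subseteq\mathbb{C}^n$ denotes its complex zero set and the imaginary projection of $f$ is $\mathcal{I}(f)=\{\Im(\mathbf z):\mathbf z\in\mathcal V(f)\}\subseteq\mathbb{R}^n$, where $\Im$ is taken componentwise. A homogeneous polynomial $f$ is hyperbolic in direction $\mathbf e\in\mathbb{R}^n$ if $f(\mathbf e)\neq 0$ and for every $\mathbf x\in\mathbb{R}^n$ the univariate polynomial $t\mapsto f(\mathbf x+t\mathbf e)$ has only real roots. In that case the hyperbolicity cone of $f$ with respect to $\mathbf e$ is $C(\mathbf e)=\{\mathbf x\in\mathbb{R}^n: f(\mathbf x+t\mathbf e)=0\Rightarrow t<0\}$. The hyperbolicity cones of $f$ are the sets $C(\mathbf e)$ for all directions $\mathbf e$ in which $f$ is hyperbolic. *)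

theory Defs
  imports "HOL-Analysis.Analysis" "HOL-Library.Poly_Mapping"
begin

text \<open>Multivariate polynomials in the variables indexed by the finite type 'n with real
  coefficients: finitely supported maps from exponent vectors (finitely supported
  'n => nat) to real coefficients.\<close>
type_synonym 'n rpoly = "('n \<Rightarrow>\<^sub>0 nat) \<Rightarrow>\<^sub>0 real"

definition peval :: "'n::finite rpoly \<Rightarrow> complex^'n \<Rightarrow> complex" where
  "peval f z = (\<Sum>m\<in>Poly_Mapping.keys f.
      complex_of_real (Poly_Mapping.lookup f m) * (\<Prod>i\<in>UNIV. (z $ i) ^ Poly_Mapping.lookup m i))"

definition cvec :: "real^'n \<Rightarrow> complex^'n" where
  "cvec x = (\<chi> i. complex_of_real (x $ i))"

definition homogeneous :: "'n::finite rpoly \<Rightarrow> bool" where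
  "homogeneous f \<longleftrightarrow> (\<exists>d. \<forall>m\<in>Poly_Mapping.keys f. (\<Sum>i\<in>UNIV. Poly_Mapping.lookup m i) = d)"

definition zero_set :: "'n::finite rpoly \<Rightarrow> (complex^'n) set" where
  "zero_set f = {z. peval f z = 0}"

definition imag_proj :: "'n::finite rpoly \<Rightarrow> (real^'n) set" where
  "imag_proj f = (\<lambda>z. \<chi> i. Im (z $ i)) ` zero_set f"

definition hyperbolic :: "'n::finite rpoly \<Rightarrow> real^'n \<Rightarrow> bool" where
  "hyperbolic f e \<longleftrightarrow> homogeneous f \<and> peval f (cvec e) \<noteq> 0 \<and>
     (\<forall>x::real^'n. \<forall>t::complex. peval f (cvec x + t *s cvec e) = 0 \<longrightarrow> Im t = 0)"

definition hyp_cone :: "'n::finite rpoly \<Rightarrow> real^'n \<Rightarrow> (real^'n) set" where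
  "hyp_cone f e = {x. \<forall>t::real. peval f (cvec (x + t *\<^sub>R e)) = 0 \<longrightarrow> t < 0}"

end

theory Submission
  imports Defs "HOL-Computational_Algebra.Fundamental_Theorem_Algebra"
begin

text \<open>
  For homogeneous \<open>f\<close>, rescaling a zero \<open>y + t x\<close> by \<open>1 / Im t\<close> shows that \<open>f\<close> is hyperbolic in
  direction \<open>x\<close> exactly when \<open>x \<notin> I(f)\<close>. The analytic input is the continuity of the roots of
  \<open>t \<mapsto> f(w + t v)\<close> in \<open>(w, v)\<close> as long as \<open>f(v) \<noteq> 0\<close>: the roots stay locally bounded, and a
  root-free disc of radius \<open>\<epsilon>\<close> about \<open>t\<^sub>0\<close> forces \<open>|f(w + t\<^sub>0 v)| \<ge> |f(v)| \<epsilon>\<^sup>d\<close>. Hence, over a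
  connected set of parameters, roots can neither enter nor leave a closed region through a part of
  its boundary that they never touch.

  Let \<open>e\<close> be hyperbolic. The cone \<open>C(e)\<close> is star-shaped about \<open>e\<close>. Moving the direction from \<open>e\<close>
  to \<open>x \<in> C(e)\<close>, the roots of \<open>t \<mapsto> f(u + i\<alpha>e + t x)\<close> with \<open>\<alpha> > 0\<close> stay in the lower half plane;
  letting \<open>\<alpha> \<rightarrow> 0\<close> gives Garding's theorem that \<open>f\<close> is hyperbolic in every direction of \<open>C(e)\<close>
  (the upper half plane is excluded by conjugation). So \<open>C(e)\<close> is a connected subset of the
  complement of \<open>I(f)\<close> containing \<open>e\<close>. Conversely, on a connected set where \<open>f\<close> does not vanish,
  the real roots of \<open>t \<mapsto> f(x + t e)\<close> cannot cross \<open>0\<close>, so the component of \<open>e\<close> lies in \<open>C(e)\<close>.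
\<close>

definition homogeneous_of_degree :: "'n::finite rpoly \<Rightarrow> nat \<Rightarrow> bool" where
  "homogeneous_of_degree f d \<longleftrightarrow> (\<forall>m\<in>Poly_Mapping.keys f. (\<Sum>i\<in>UNIV. Poly_Mapping.lookup m i) = d)"

lemma homogeneous_iff_of_degree: "homogeneous f \<longleftrightarrow> (\<exists>d. homogeneous_of_degree f d)"
  by (simp add: homogeneous_def homogeneous_of_degree_def)

lemma peval_smult:
  assumes "homogeneous_of_degree f d"
  shows "peval f (c *s z) = c ^ d * peval f z"
proof -
  have "(\<Prod>i\<in>UNIV. (c * z $ i) ^ Poly_Mapping.lookup m i)
      = c ^ d * (\<Prod>i\<in>UNIV. (z $ i) ^ Poly_Mapping.lookup m i)"
    if "m \<in> Poly_Mapping.keys f" for m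
  proof -
    have "c ^ d = (\<Prod>i\<in>UNIV. c ^ Poly_Mapping.lookup m i)"
      using assms that by (simp add: homogeneous_of_degree_def flip: power_sum)
    then show ?thesis by (simp add: power_mult_distrib prod.distrib)
  qed
  then show ?thesis
    unfolding peval_def by (simp add: sum_distrib_left mult.left_commute cong: sum.cong)
qed

lemma peval_smult_eq_0_iff:
  assumes "homogeneous f" and "c \<noteq> 0"
  shows "peval f (c *s z) = 0 \<longleftrightarrow> peval f z = 0"
  using assms peval_smult by (fastforce simp: homogeneous_iff_of_degree)

lemma peval_cnj: "peval f (\<chi> i. cnj (z $ i)) = cnj (peval f z)"
  unfolding peval_def by simp

lemma cvec_nth [simp]: "cvec x $ i = complex_of_real (x $ i)"
  by (simp add: cvec_def)

lemma cvec_0 [simp]: "cvec 0 = 0"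
  by (simp add: vec_eq_iff)

lemma cvec_add_scaleR: "cvec (x + t *\<^sub>R y) = cvec x + complex_of_real t *s cvec y"
  by (simp add: vec_eq_iff)

lemma tendsto_vector_smult [tendsto_intros]:
  fixes x :: "'a \<Rightarrow> 'b::real_normed_algebra^'n"
  assumes "(c \<longlongrightarrow> c0) F" and "(x \<longlongrightarrow> x0) F"
  shows "((\<lambda>p. c p *s x p) \<longlongrightarrow> c0 *s x0) F"
  by (rule vec_tendstoI) (simp add: tendsto_mult assms tendsto_vec_nth)

lemma continuous_on_vector_smult [continuous_intros]:
  fixes x :: "'a::topological_space \<Rightarrow> 'b::real_normed_algebra^'n"
  assumes "continuous_on S c" and "continuous_on S x"
  shows "continuous_on S (\<lambda>p. c p *s x p)"
  using assms unfolding continuous_on_def by (auto intro: tendsto_vector_smult)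

lemma tendsto_cvec [tendsto_intros]: "(g \<longlongrightarrow> a) F \<Longrightarrow> ((\<lambda>p. cvec (g p)) \<longlongrightarrow> cvec a) F"
  unfolding cvec_def by (intro vec_tendstoI) (simp add: tendsto_of_real tendsto_vec_nth)

lemma continuous_on_cvec [continuous_intros]:
  "continuous_on S g \<Longrightarrow> continuous_on S (\<lambda>p. cvec (g p))"
  unfolding continuous_on_def by (auto intro: tendsto_cvec)

lemma tendsto_peval [tendsto_intros]:
  "(g \<longlongrightarrow> a) F \<Longrightarrow> ((\<lambda>p. peval f (g p)) \<longlongrightarrow> peval f a) F"
  unfolding peval_def by (intro tendsto_intros)

lemma continuous_on_peval [continuous_intros]:
  "continuous_on S g \<Longrightarrow> continuous_on S (\<lambda>p. peval f (g p))"
  unfolding continuous_on_def by (auto intro: tendsto_peval)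

lemma norm_vector_smult: "norm (c *s (x :: complex^'n)) = norm c * norm x"
  unfolding norm_vec_def by (simp add: norm_mult L2_set_right_distrib)

section \<open>Roots along complex lines\<close>

definition line_poly :: "'n::finite rpoly \<Rightarrow> complex^'n \<Rightarrow> complex^'n \<Rightarrow> complex poly" where
  "line_poly f w v = (\<Sum>m\<in>Poly_Mapping.keys f. smult (complex_of_real (Poly_Mapping.lookup f m))
       (\<Prod>i\<in>UNIV. [:w $ i, v $ i:] ^ Poly_Mapping.lookup m i))"

lemma poly_line_poly: "poly (line_poly f w v) t = peval f (w + t *s v)"
  unfolding line_poly_def peval_def by (simp add: poly_sum poly_prod poly_power algebra_simps)

lemma coeff_mult_at_degree_bounds:
  fixes p q :: "'a::comm_semiring_1 poly"
  assumes "degree p \<le> a" and "degree q \<le> b"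
  shows "coeff (p * q) (a + b) = coeff p a * coeff q b"
proof -
  have "coeff p i * coeff q (a + b - i) = 0" if "i \<le> a + b" "i \<noteq> a" for i
    using assms that by (cases "i < a") (auto simp: coeff_eq_0)
  then have "(\<Sum>i\<le>a+b. coeff p i * coeff q (a + b - i)) = coeff p a * coeff q b"
    by (subst sum.mono_neutral_right[of _ "{a}"]) auto
  then show ?thesis
    by (simp add: coeff_mult)
qed

lemma coeff_prod_at_degree_bounds:
  fixes g :: "'b \<Rightarrow> 'a::comm_semiring_1 poly"
  assumes "finite A" and "\<And>i. i \<in> A \<Longrightarrow> degree (g i) \<le> a i"
  shows "coeff (\<Prod>i\<in>A. g i) (\<Sum>i\<in>A. a i) = (\<Prod>i\<in>A. coeff (g i) (a i))"
  using assms
proof (induction A rule: finite_induct)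
  case (insert x A)
  have "degree (\<Prod>i\<in>A. g i) \<le> (\<Sum>i\<in>A. a i)"
    using insert degree_prod_sum_le[of A g] sum_mono[of A "\<lambda>i. degree (g i)" a] by auto
  then show ?case
    using insert by (simp add: coeff_mult_at_degree_bounds)
qed simp

lemma coeff_power_at_degree_bound:
  fixes p :: "'a::comm_semiring_1 poly"
  assumes "degree p \<le> a"
  shows "coeff (p ^ k) (k * a) = coeff p a ^ k"
  using coeff_prod_at_degree_bounds[of "{..<k}" "\<lambda>_. p" "\<lambda>_. a"] assms by simp

lemma degree_line_poly:
  assumes "homogeneous_of_degree f d"
  shows "degree (line_poly f w v) \<le> d" and "coeff (line_poly f w v) d = peval f v"
proof -
  define mono_poly where "mono_poly m = (\<Prod>i\<in>UNIV. [:w $ i, v $ i:] ^ Poly_Mapping.lookup m i)" for m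
  have deg_pow: "degree ([:w $ i, v $ i:] ^ k) \<le> k" for i k
    using degree_power_le[of "[:w $ i, v $ i:]" k] by (simp split: if_splits)
  have coeff_pow: "coeff ([:w $ i, v $ i:] ^ k) k = (v $ i) ^ k" for i k
    using coeff_power_at_degree_bound[of "[:w $ i, v $ i:]" 1 k] by simp
  have mono_poly: "degree (mono_poly m) \<le> d \<and>
      coeff (mono_poly m) d = (\<Prod>i\<in>UNIV. (v $ i) ^ Poly_Mapping.lookup m i)"
    if "m \<in> Poly_Mapping.keys f" for m
    using assms that degree_prod_sum_le[of UNIV "\<lambda>i. [:w $ i, v $ i:] ^ Poly_Mapping.lookup m i"]
      sum_mono[of UNIV "\<lambda>i. degree ([:w $ i, v $ i:] ^ Poly_Mapping.lookup m i)" "Poly_Mapping.lookup m"]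
      coeff_prod_at_degree_bounds[of UNIV "\<lambda>i. [:w $ i, v $ i:] ^ Poly_Mapping.lookup m i" "Poly_Mapping.lookup m"]
    by (auto simp: mono_poly_def homogeneous_of_degree_def deg_pow coeff_pow)
  show "degree (line_poly f w v) \<le> d"
    unfolding line_poly_def mono_poly_def[symmetric]
    by (intro degree_sum_le) (auto intro: order_trans[OF degree_smult_le] dest: mono_poly)
  show "coeff (line_poly f w v) d = peval f v"
    unfolding line_poly_def mono_poly_def[symmetric] peval_def coeff_sum
    by (intro sum.cong refl) (simp add: mono_poly)
qed

lemma peval_line_factor:
  assumes "homogeneous_of_degree f d" and "peval f v \<noteq> 0"
  obtains r :: "nat \<Rightarrow> complex" where "\<And>t. peval f (w + t *s v) = peval f v * (\<Prod>i<d. t - r i)"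
proof -
  let ?p = "line_poly f w v"
  have deg: "degree ?p = d"
    using degree_line_poly[OF assms(1)] assms(2) by (metis le_antisym le_degree)
  obtain r where dec: "smult (lead_coeff ?p) (\<Prod>i<degree ?p. [:-r i, 1:]) = ?p"
    by (rule complex_poly_decompose')
  have "poly ?p t = lead_coeff ?p * (\<Prod>i<degree ?p. t - r i)" for t
    by (subst (1) dec[symmetric]) (simp add: poly_prod)
  with deg have "poly ?p t = peval f v * (\<Prod>i<d. t - r i)" for t
    using degree_line_poly(2)[OF assms(1), of w v] by simp
  then have "peval f (w + t *s v) = peval f v * (\<Prod>i<d. t - r i)" for t
    by (simp add: poly_line_poly)
  then show thesis ..
qed

lemma norm_peval_line_ge:
  assumes "homogeneous_of_degree f d" and "peval f v \<noteq> 0" and "0 \<le> \<epsilon>"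
    and no_root: "\<And>t. dist t t0 < \<epsilon> \<Longrightarrow> peval f (w + t *s v) \<noteq> 0"
  shows "norm (peval f v) * \<epsilon> ^ d \<le> norm (peval f (w + t0 *s v))"
proof -
  obtain r where r: "\<And>t. peval f (w + t *s v) = peval f v * (\<Prod>i<d. t - r i)"
    using peval_line_factor[OF assms(1,2)] by blast
  have "\<epsilon> \<le> norm (t0 - r i)" if "i < d" for i
    using no_root[of "r i"] that by (force simp: r dist_norm norm_minus_commute)
  then have "\<epsilon> ^ d \<le> (\<Prod>i<d. norm (t0 - r i))"
    using prod_mono[of "{..<d}" "\<lambda>_. \<epsilon>"] \<open>0 \<le> \<epsilon>\<close> by simp
  then show ?thesis
    by (simp add: r norm_mult prod_norm mult_left_mono)
qed

lemma eventually_root_near: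
  assumes "homogeneous f" and w: "(w \<longlongrightarrow> w0) F" and v: "(v \<longlongrightarrow> v0) F"
    and "peval f v0 \<noteq> 0" and "peval f (w0 + t0 *s v0) = 0" and "\<epsilon> > 0"
  shows "eventually (\<lambda>p. \<exists>t. dist t t0 < \<epsilon> \<and> peval f (w p + t *s v p) = 0) F"
proof -
  obtain d where d: "homogeneous_of_degree f d"
    using assms(1) homogeneous_iff_of_degree by blast
  define c where "c = norm (peval f v0) / 2"
  have "c > 0" using assms(4) by (simp add: c_def)
  have "((\<lambda>p. norm (peval f (v p))) \<longlongrightarrow> 2 * c) F"
    unfolding c_def using v by (auto intro!: tendsto_intros)
  then have "eventually (\<lambda>p. c < norm (peval f (v p))) F"
    using \<open>c > 0\<close> by (intro order_tendstoD) auto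
  moreover have "((\<lambda>p. norm (peval f (w p + t0 *s v p))) \<longlongrightarrow> norm (peval f (w0 + t0 *s v0))) F"
    using w v by (intro tendsto_intros)
  then have "eventually (\<lambda>p. norm (peval f (w p + t0 *s v p)) < c * \<epsilon> ^ d) F"
    using \<open>c > 0\<close> \<open>\<epsilon> > 0\<close> assms(5) by (intro order_tendstoD) auto
  ultimately show ?thesis
  proof eventually_elim
    case (elim p)
    show ?case
    proof (rule ccontr)
      assume "\<nexists>t. dist t t0 < \<epsilon> \<and> peval f (w p + t *s v p) = 0"
      then have "norm (peval f (v p)) * \<epsilon> ^ d \<le> norm (peval f (w p + t0 *s v p))"
        using elim \<open>c > 0\<close> \<open>\<epsilon> > 0\<close> by (intro norm_peval_line_ge[OF d]) auto
      moreover have "c * \<epsilon> ^ d < norm (peval f (v p)) * \<epsilon> ^ d"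
        using elim \<open>\<epsilon> > 0\<close> by simp
      ultimately show False using elim by simp
    qed
  qed
qed

lemma open_root_in_open:
  fixes w v :: "'a::topological_space \<Rightarrow> complex^'n::finite"
  assumes "homogeneous f" and "continuous_on UNIV w" and "continuous_on UNIV v" and "open G"
  shows "open {p. peval f (v p) \<noteq> 0 \<and> (\<exists>t\<in>G. peval f (w p + t *s v p) = 0)}"
    (is "open ?S")
proof (subst open_subopen, intro ballI)
  fix p assume "p \<in> ?S"
  then obtain t0 \<epsilon> where "peval f (v p) \<noteq> 0" "peval f (w p + t0 *s v p) = 0"
      "\<epsilon> > 0" "ball t0 \<epsilon> \<subseteq> G"
    using \<open>open G\<close> by (force simp: open_contains_ball)
  moreover have "(w \<longlongrightarrow> w p) (nhds p)" "(v \<longlongrightarrow> v p) (nhds p)"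
    using assms(2,3) by (simp_all add: continuous_on_def flip: tendsto_at_iff_tendsto_nhds)
  ultimately have "eventually (\<lambda>q. peval f (v q) \<noteq> 0 \<and>
      (\<exists>t. dist t t0 < \<epsilon> \<and> peval f (w q + t *s v q) = 0)) (nhds p)"
    using assms(1)
    by (intro eventually_conj eventually_root_near tendsto_imp_eventually_ne)
      (auto intro: tendsto_peval)
  then obtain T where "open T" "p \<in> T" "T \<subseteq> ?S"
    using \<open>ball t0 \<epsilon> \<subseteq> G\<close> by (force simp: eventually_nhds dist_commute)
  then show "\<exists>T. open T \<and> p \<in> T \<and> T \<subseteq> ?S" by blast
qed

lemma roots_locally_bounded:
  fixes w v :: "'a::metric_space \<Rightarrow> complex^'n::finite"
  assumes "homogeneous f" and "continuous_on UNIV w" and "continuous_on UNIV v"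
    and "peval f (v p1) \<noteq> 0"
  obtains r R where "r > 0" "\<And>p t. dist p p1 < r \<Longrightarrow> peval f (w p + t *s v p) = 0 \<Longrightarrow> norm t \<le> R"
proof -
  have "open {y. peval f y \<noteq> 0}"
    by (intro open_Collect_neq continuous_intros)
  then obtain \<delta> where "\<delta> > 0" and \<delta>: "ball (v p1) \<delta> \<subseteq> {y. peval f y \<noteq> 0}"
    using assms(4) by (auto simp: open_contains_ball)
  obtain r1 where "r1 > 0" and r1: "\<And>p. dist p p1 < r1 \<Longrightarrow> dist (v p) (v p1) < \<delta> / 2"
    using assms(3) \<open>\<delta> > 0\<close> unfolding continuous_on_iff by (metis UNIV_I half_gt_zero)
  obtain r2 where "r2 > 0" and r2: "\<And>p. dist p p1 < r2 \<Longrightarrow> dist (w p) (w p1) < 1"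
    using assms(2) unfolding continuous_on_iff by (metis UNIV_I zero_less_one)
  define M where "M = norm (w p1) + 1"
  have "M > 0" by (simp add: M_def add_nonneg_pos)
  have "norm t \<le> 2 * M / \<delta>"
    if p: "dist p p1 < min r1 r2" and root: "peval f (w p + t *s v p) = 0" for p t
  proof (rule ccontr)
    assume "\<not> norm t \<le> 2 * M / \<delta>"
    then have big: "2 * M < norm t * \<delta>" and "t \<noteq> 0"
      using \<open>\<delta> > 0\<close> \<open>M > 0\<close> by (auto simp: field_simps)
    define y where "y = (1 / t) *s w p + v p"
    \<comment> \<open>a root of large modulus makes \<open>y\<close>, a point close to \<open>v p1\<close>, a zero of \<open>f\<close>\<close>
    have "t *s y = w p + t *s v p"
      using \<open>t \<noteq> 0\<close> by (simp add: y_def vec_eq_iff field_simps)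
    then have "peval f y = 0"
      using root by (metis peval_smult_eq_0_iff[OF assms(1) \<open>t \<noteq> 0\<close>])
    have "norm (w p) < M"
      using r2[of p] p norm_triangle_ineq2[of "w p" "w p1"] by (simp add: M_def dist_norm)
    then have "2 * norm (w p) < norm t * \<delta>"
      using big by simp
    then have "norm ((1 / t) *s w p) < \<delta> / 2"
      using \<open>t \<noteq> 0\<close> \<open>\<delta> > 0\<close> by (simp add: norm_vector_smult norm_divide field_simps)
    moreover have "dist (v p) (v p1) < \<delta> / 2"
      using r1 p by simp
    moreover have "dist y (v p1) \<le> norm ((1 / t) *s w p) + dist (v p) (v p1)"
      using norm_triangle_ineq[of "(1 / t) *s w p" "v p - v p1"]
      by (simp add: y_def dist_norm add_diff_eq)
    ultimately have "dist y (v p1) < \<delta>"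
      by simp
    then show False
      using \<delta> \<open>peval f y = 0\<close> by (auto simp: dist_commute)
  qed
  then show thesis
    using that[of "min r1 r2"] \<open>r1 > 0\<close> \<open>r2 > 0\<close> by auto
qed

lemma open_no_root_in_closed:
  fixes w v :: "'a::heine_borel \<Rightarrow> complex^'n::finite"
  assumes "homogeneous f" and "continuous_on UNIV w" and "continuous_on UNIV v" and "closed F"
  shows "open {p. peval f (v p) \<noteq> 0 \<and> (\<forall>t\<in>F. peval f (w p + t *s v p) \<noteq> 0)}"
    (is "open ?S")
proof (subst open_subopen, intro ballI)
  fix p1 assume "p1 \<in> ?S"
  then have "peval f (v p1) \<noteq> 0" by simp
  then obtain r R where "r > 0"
    and R: "\<And>p t. dist p p1 < r \<Longrightarrow> peval f (w p + t *s v p) = 0 \<Longrightarrow> norm t \<le> R"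
    using roots_locally_bounded[OF assms(1-3)] by blast
  define K where "K = (cball p1 (r / 2) \<times> (F \<inter> cball 0 R)) \<inter>
      {(p, t). peval f (w p + t *s v p) = 0}"
  \<comment> \<open>the roots in \<open>F\<close> over a compact ball of parameters form a compact set, by the root bound\<close>
  have "compact K"
  proof -
    have "continuous_on UNIV (\<lambda>x :: 'a \<times> complex. w (fst x))"
      "continuous_on UNIV (\<lambda>x :: 'a \<times> complex. v (fst x))"
      by (auto intro!: continuous_on_compose2[OF assms(2) continuous_on_fst[OF continuous_on_id]]
          continuous_on_compose2[OF assms(3) continuous_on_fst[OF continuous_on_id]])
    then have "closed {x :: 'a \<times> complex. peval f (w (fst x) + snd x *s v (fst x)) = 0}"
      by (intro closed_Collect_eq continuous_intros)
    then show ?thesis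
      unfolding K_def using \<open>closed F\<close>
      by (intro compact_Int_closed compact_Times compact_cball closed_Int_compact)
        (auto simp: case_prod_unfold)
  qed
  define T where "T = ball p1 (r / 2) \<inter> - fst ` K \<inter> {p. peval f (v p) \<noteq> 0}"
  have "open T"
    unfolding T_def using \<open>compact K\<close>
    by (intro open_Int open_Compl compact_imp_closed compact_continuous_image open_Collect_neq
        continuous_intros assms(3)) auto
  moreover have "p1 \<in> T"
    using \<open>p1 \<in> ?S\<close> \<open>r > 0\<close> by (auto simp: T_def K_def)
  moreover have "T \<subseteq> ?S"
  proof
    fix p assume "p \<in> T"
    have "peval f (w p + t *s v p) \<noteq> 0" if "t \<in> F" for t
    proof
      assume "peval f (w p + t *s v p) = 0"
      then have "(p, t) \<in> K"
        using \<open>p \<in> T\<close> \<open>t \<in> F\<close> R[of p t] \<open>r > 0\<close> by (auto simp: T_def K_def dist_commute)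
      then show False
        using \<open>p \<in> T\<close> by (force simp: T_def)
    qed
    then show "p \<in> ?S"
      using \<open>p \<in> T\<close> by (simp add: T_def)
  qed
  ultimately show "\<exists>T. open T \<and> p1 \<in> T \<and> T \<subseteq> ?S" by blast
qed

text \<open>The parameters without roots in \<open>F\<close> and those with a root in \<open>G\<close> split \<open>S\<close> into two open sets.\<close>

lemma no_root_in_closed_connected:
  fixes w v :: "'a::heine_borel \<Rightarrow> complex^'n::finite"
  assumes "homogeneous f" and "continuous_on UNIV w" and "continuous_on UNIV v"
    and "connected S" and "\<And>p. p \<in> S \<Longrightarrow> peval f (v p) \<noteq> 0"
    and "closed F" and "open G" and "G \<subseteq> F"
    and no_boundary_root: "\<And>p t. p \<in> S \<Longrightarrow> t \<in> F - G \<Longrightarrow> peval f (w p + t *s v p) \<noteq> 0"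
    and "p0 \<in> S" and no_root0: "\<And>t. t \<in> F \<Longrightarrow> peval f (w p0 + t *s v p0) \<noteq> 0"
    and "p \<in> S" and "t \<in> F"
  shows "peval f (w p + t *s v p) \<noteq> 0"
proof -
  let ?A = "{p. peval f (v p) \<noteq> 0 \<and> (\<forall>t\<in>F. peval f (w p + t *s v p) \<noteq> 0)}"
  let ?B = "{p. peval f (v p) \<noteq> 0 \<and> (\<exists>t\<in>G. peval f (w p + t *s v p) = 0)}"
  have "?A \<inter> S = {} \<or> ?B \<inter> S = {}"
  proof (rule connectedD[OF \<open>connected S\<close>])
    show "open ?A" using open_no_root_in_closed[OF assms(1-3,6)] .
    show "open ?B" using open_root_in_open[OF assms(1-3,7)] .
    show "?A \<inter> ?B \<inter> S = {}" using \<open>G \<subseteq> F\<close> by blast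
    show "S \<subseteq> ?A \<union> ?B" using assms(5) no_boundary_root by blast
  qed
  moreover have "p0 \<in> ?A \<inter> S"
    using assms(5,10) no_root0 by blast
  ultimately show ?thesis
    using \<open>p \<in> S\<close> \<open>t \<in> F\<close> \<open>G \<subseteq> F\<close> assms(5) no_boundary_root by blast
qed

section \<open>Hyperbolicity cones\<close>

lemma imag_proj_iff: "x \<in> imag_proj f \<longleftrightarrow> (\<exists>y. peval f (cvec y + \<i> *s cvec x) = 0)"
proof
  assume "x \<in> imag_proj f"
  then obtain z where "peval f z = 0" "x = (\<chi> i. Im (z $ i))"
    by (auto simp: imag_proj_def zero_set_def)
  moreover have "z = cvec (\<chi> i. Re (z $ i)) + \<i> *s cvec (\<chi> i. Im (z $ i))"
    by (simp add: vec_eq_iff complex_eq_iff)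
  ultimately show "\<exists>y. peval f (cvec y + \<i> *s cvec x) = 0" by metis
next
  assume "\<exists>y. peval f (cvec y + \<i> *s cvec x) = 0"
  then obtain y where "cvec y + \<i> *s cvec x \<in> zero_set f"
    by (auto simp: zero_set_def)
  moreover have "x = (\<chi> i. Im ((cvec y + \<i> *s cvec x) $ i))"
    by (simp add: vec_eq_iff)
  ultimately show "x \<in> imag_proj f"
    unfolding imag_proj_def by blast
qed

lemma hyperbolic_iff_notin_imag_proj:
  assumes "homogeneous f"
  shows "hyperbolic f x \<longleftrightarrow> x \<notin> imag_proj f"
proof
  assume "hyperbolic f x"
  then show "x \<notin> imag_proj f"
    by (fastforce simp: imag_proj_iff hyperbolic_def)
next
  assume x: "x \<notin> imag_proj f"
  have "peval f (cvec 0 + \<i> *s cvec x) \<noteq> 0"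
    using x unfolding imag_proj_iff by blast
  then have "peval f (cvec x) \<noteq> 0"
    using peval_smult_eq_0_iff[OF assms] by simp
  moreover have "Im t = 0" if root: "peval f (cvec y + t *s cvec x) = 0" for y t
  proof (rule ccontr)
    assume "Im t \<noteq> 0"
    have "complex_of_real (1 / Im t) *s (cvec y + t *s cvec x)
        = cvec ((1 / Im t) *\<^sub>R (y + Re t *\<^sub>R x)) + \<i> *s cvec x"
      using \<open>Im t \<noteq> 0\<close> by (simp add: vec_eq_iff complex_eq_iff field_simps)
    then have "peval f (cvec ((1 / Im t) *\<^sub>R (y + Re t *\<^sub>R x)) + \<i> *s cvec x) = 0"
      using root \<open>Im t \<noteq> 0\<close> by (metis peval_smult_eq_0_iff[OF assms] of_real_eq_0_iff
          divide_eq_0_iff one_neq_zero)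
    then show False
      using x by (auto simp: imag_proj_iff)
  qed
  ultimately show "hyperbolic f x"
    using assms by (auto simp: hyperbolic_def)
qed

lemma peval_nonzero_if_hyp_cone: "x \<in> hyp_cone f e \<Longrightarrow> peval f (cvec x) \<noteq> 0"
  unfolding hyp_cone_def mem_Collect_eq by (drule spec[of _ 0]) simp

context
  fixes f :: "'n::finite rpoly" and e :: "real^'n"
  assumes hyperbolic: "hyperbolic f e"
begin

lemma homogeneous_if_hyperbolic: "homogeneous f"
  using hyperbolic by (simp add: hyperbolic_def)

lemma hyperbolic_root_real: "peval f (cvec x + t *s cvec e) = 0 \<Longrightarrow> Im t = 0"
  using hyperbolic by (simp add: hyperbolic_def)

lemma hyp_cone_iff_no_root:
  "x \<in> hyp_cone f e \<longleftrightarrow> (\<forall>t. 0 \<le> Re t \<longrightarrow> peval f (cvec x + t *s cvec e) \<noteq> 0)"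
proof
  assume x: "x \<in> hyp_cone f e"
  show "\<forall>t. 0 \<le> Re t \<longrightarrow> peval f (cvec x + t *s cvec e) \<noteq> 0"
  proof (intro allI impI notI)
    fix t assume "0 \<le> Re t" and root: "peval f (cvec x + t *s cvec e) = 0"
    then have "t = complex_of_real (Re t)"
      using hyperbolic_root_real by (simp add: complex_eq_iff)
    then have "peval f (cvec (x + Re t *\<^sub>R e)) = 0"
      using root by (metis cvec_add_scaleR)
    then show False
      using x \<open>0 \<le> Re t\<close> by (auto simp: hyp_cone_def)
  qed
next
  assume no_root: "\<forall>t. 0 \<le> Re t \<longrightarrow> peval f (cvec x + t *s cvec e) \<noteq> 0"
  show "x \<in> hyp_cone f e"
  proof (unfold hyp_cone_def, intro CollectI allI impI)
    fix t :: real assume "peval f (cvec (x + t *\<^sub>R e)) = 0"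
    then show "t < 0"
      using no_root[rule_format, of "complex_of_real t"] by (force simp: cvec_add_scaleR)
  qed
qed

lemma hyp_cone_self: "e \<in> hyp_cone f e"
proof (unfold hyp_cone_def, intro CollectI allI impI)
  fix t :: real assume "peval f (cvec (e + t *\<^sub>R e)) = 0"
  moreover have "cvec (e + t *\<^sub>R e) = complex_of_real (1 + t) *s cvec e"
    by (simp add: vec_eq_iff algebra_simps)
  ultimately have "1 + t = 0"
    using hyperbolic peval_smult_eq_0_iff[OF homogeneous_if_hyperbolic]
    by (metis hyperbolic_def of_real_eq_0_iff)
  then show "t < 0" by simp
qed

lemma hyp_cone_segment:
  assumes "x \<in> hyp_cone f e" and "0 \<le> s" and "s \<le> 1"
  shows "(1 - s) *\<^sub>R e + s *\<^sub>R x \<in> hyp_cone f e"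
proof (cases "s = 0")
  case True
  then show ?thesis using hyp_cone_self by simp
next
  case False
  show ?thesis
  proof (unfold hyp_cone_def, intro CollectI allI impI)
    fix t :: real assume root: "peval f (cvec ((1 - s) *\<^sub>R e + s *\<^sub>R x + t *\<^sub>R e)) = 0"
    define r where "r = (1 - s + t) / s"
    have "cvec ((1 - s) *\<^sub>R e + s *\<^sub>R x + t *\<^sub>R e) = complex_of_real s *s cvec (x + r *\<^sub>R e)"
      using \<open>s \<noteq> 0\<close> by (simp add: vec_eq_iff r_def field_simps)
    then have "peval f (cvec (x + r *\<^sub>R e)) = 0"
      using root \<open>s \<noteq> 0\<close> peval_smult_eq_0_iff[OF homogeneous_if_hyperbolic]
      by (metis of_real_eq_0_iff)
    then have "r < 0"
      using assms(1) by (simp add: hyp_cone_def)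
    then show "t < 0"
      using assms(2,3) \<open>s \<noteq> 0\<close> by (simp add: r_def divide_less_0_iff)
  qed
qed

lemma connected_hyp_cone: "connected (hyp_cone f e)"
proof (rule starlike_imp_connected)
  show "starlike (hyp_cone f e)"
    unfolding starlike_def
  proof (intro bexI[OF _ hyp_cone_self] ballI subsetI)
    fix x y assume "x \<in> hyp_cone f e" and "y \<in> closed_segment e x"
    then show "y \<in> hyp_cone f e"
      using hyp_cone_segment by (auto simp: closed_segment_def)
  qed
qed

lemma connected_subset_hyp_cone:
  assumes "connected T" and nonzero: "\<And>x. x \<in> T \<Longrightarrow> peval f (cvec x) \<noteq> 0" and "e \<in> T"
  shows "T \<subseteq> hyp_cone f e"
proof
  fix x assume "x \<in> T"
  have no_imag_root: "peval f (cvec p + t *s cvec e) \<noteq> 0"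
    if "p \<in> T" and "t \<in> {t. 0 \<le> Re t} - {t. 0 < Re t}" for p t
  proof
    assume root: "peval f (cvec p + t *s cvec e) = 0"
    then have "t = 0"
      using that(2) hyperbolic_root_real by (simp add: complex_eq_iff)
    then show False
      using root nonzero \<open>p \<in> T\<close> by simp
  qed
  have no_root_e: "\<And>t. t \<in> {t. 0 \<le> Re t} \<Longrightarrow> peval f (cvec e + t *s cvec e) \<noteq> 0"
    using hyp_cone_self hyp_cone_iff_no_root by blast
  have "peval f (cvec e) \<noteq> 0"
    using hyperbolic by (simp add: hyperbolic_def)
  then have "peval f (cvec x + t *s cvec e) \<noteq> 0" if "0 \<le> Re t" for t
    using no_root_in_closed_connected[OF homogeneous_if_hyperbolic
        continuous_on_cvec[OF continuous_on_id] continuous_on_const \<open>connected T\<close> _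
        closed_halfspace_Re_ge[of 0] open_halfspace_Re_gt[of 0] _ no_imag_root \<open>e \<in> T\<close> no_root_e
        \<open>x \<in> T\<close>] that
    by force
  then show "x \<in> hyp_cone f e"
    using hyp_cone_iff_no_root by blast
qed

lemma hyp_cone_roots_lower_half_plane:
  assumes x: "x \<in> hyp_cone f e" and "\<alpha> > 0"
    and root: "peval f (cvec u + (\<i> * complex_of_real \<alpha>) *s cvec e + \<tau> *s cvec x) = 0"
  shows "Im \<tau> < 0"
proof -
  define w where "w = cvec u + (\<i> * complex_of_real \<alpha>) *s cvec e"
  define v where "v s = cvec ((1 - s) *\<^sub>R e + s *\<^sub>R x)" for s :: real
  \<comment> \<open>moving the direction along the segment from \<open>e\<close> to \<open>x\<close>, no root can cross the real axis\<close>
  have no_real_root: "peval f (w + \<tau> *s v s) \<noteq> 0" if "\<tau> \<in> {t. 0 \<le> Im t} - {t. 0 < Im t}" for s \<tau>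
  proof
    assume "peval f (w + \<tau> *s v s) = 0"
    moreover have "w + \<tau> *s v s
        = cvec (u + Re \<tau> *\<^sub>R ((1 - s) *\<^sub>R e + s *\<^sub>R x)) + (\<i> * complex_of_real \<alpha>) *s cvec e"
      using that by (simp add: w_def v_def vec_eq_iff complex_eq_iff)
    ultimately have "Im (\<i> * complex_of_real \<alpha>) = 0"
      using hyperbolic_root_real by metis
    then show False
      using \<open>\<alpha> > 0\<close> by simp
  qed
  have no_root0: "peval f (w + \<tau> *s v 0) \<noteq> 0" if "\<tau> \<in> {t. 0 \<le> Im t}" for \<tau>
  proof
    assume "peval f (w + \<tau> *s v 0) = 0"
    moreover have "w + \<tau> *s v 0 = cvec u + (\<tau> + \<i> * complex_of_real \<alpha>) *s cvec e"
      by (simp add: w_def v_def vec_eq_iff algebra_simps)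
    ultimately have "Im (\<tau> + \<i> * complex_of_real \<alpha>) = 0"
      using hyperbolic_root_real by metis
    then show False
      using that \<open>\<alpha> > 0\<close> by simp
  qed
  have "continuous_on UNIV v"
    unfolding v_def by (intro continuous_intros)
  moreover have "peval f (v s) \<noteq> 0" if "s \<in> {0..1}" for s
    using that peval_nonzero_if_hyp_cone[OF hyp_cone_segment[OF x]]
    by (simp add: v_def)
  ultimately have "peval f (w + \<tau> *s v 1) \<noteq> 0" if "0 \<le> Im \<tau>" for \<tau>
    using no_root_in_closed_connected[where w = "\<lambda>_. w" and v = v and S = "{0..1}",
        OF homogeneous_if_hyperbolic continuous_on_const _ connected_Icc _
        closed_halfspace_Im_ge[of 0] open_halfspace_Im_gt[of 0] _ no_real_root _ no_root0] that
    by force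
  then show ?thesis
    using root by (force simp: w_def v_def not_less[symmetric])
qed

theorem hyperbolic_if_hyp_cone:
  assumes x: "x \<in> hyp_cone f e"
  shows "hyperbolic f x"
proof -
  have upper: "peval f (cvec u + \<tau> *s cvec x) \<noteq> 0" if "Im \<tau> > 0" for u \<tau>
  proof
    assume "peval f (cvec u + \<tau> *s cvec x) = 0"
    \<comment> \<open>the root in the upper half plane survives a small shift of \<open>u\<close> by \<open>\<i> \<alpha> e\<close>\<close>
    define w where "w \<alpha> = cvec u + (\<i> * complex_of_real \<alpha>) *s cvec e" for \<alpha>
    let ?O = "{\<alpha>. peval f (cvec x) \<noteq> 0 \<and> (\<exists>t\<in>{t. 0 < Im t}. peval f (w \<alpha> + t *s cvec x) = 0)}"
    have "open ?O"
      unfolding w_def using homogeneous_if_hyperbolic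
      by (intro open_root_in_open open_halfspace_Im_gt continuous_intros)
    moreover have "0 \<in> ?O"
      using that \<open>peval f (cvec u + \<tau> *s cvec x) = 0\<close> peval_nonzero_if_hyp_cone[OF x]
      by (auto simp: w_def)
    ultimately obtain \<epsilon> where "\<epsilon> > 0" "ball 0 \<epsilon> \<subseteq> ?O"
      by (meson open_contains_ball)
    moreover have "\<epsilon> / 2 \<in> ball 0 \<epsilon>"
      using \<open>\<epsilon> > 0\<close> by simp
    ultimately have "\<epsilon> / 2 \<in> ?O" by blast
    then show False
      using hyp_cone_roots_lower_half_plane[OF x, of "\<epsilon> / 2"] \<open>\<epsilon> > 0\<close> by (force simp: w_def)
  qed
  moreover have "peval f (cvec u + \<tau> *s cvec x) \<noteq> 0" if "Im \<tau> < 0" for u \<tau>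
  proof -
    have "(\<chi> i. cnj ((cvec u + cnj \<tau> *s cvec x) $ i)) = cvec u + \<tau> *s cvec x"
      by (simp add: vec_eq_iff)
    moreover have "peval f (cvec u + cnj \<tau> *s cvec x) \<noteq> 0"
      using upper[of "cnj \<tau>" u] that by simp
    ultimately show ?thesis
      by (metis peval_cnj complex_cnj_zero_iff)
  qed
  ultimately have "Im t = 0" if "peval f (cvec u + t *s cvec x) = 0" for u t
    using that by (meson linorder_neqE_linordered_idom)
  then show ?thesis
    using peval_nonzero_if_hyp_cone[OF x] homogeneous_if_hyperbolic
    by (simp add: hyperbolic_def)
qed

lemma hyp_cone_eq_connected_component:
  "hyp_cone f e = connected_component_set (- imag_proj f) e"
proof
  have "hyp_cone f e \<subseteq> - imag_proj f"
    using hyperbolic_if_hyp_cone hyperbolic_iff_notin_imag_proj[OF homogeneous_if_hyperbolic]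
    by blast
  then show "hyp_cone f e \<subseteq> connected_component_set (- imag_proj f) e"
    by (intro connected_component_maximal hyp_cone_self connected_hyp_cone)
next
  have "- imag_proj f \<subseteq> {x. peval f (cvec x) \<noteq> 0}"
    using hyperbolic_iff_notin_imag_proj[OF homogeneous_if_hyperbolic]
    by (auto simp: hyperbolic_def)
  moreover have "e \<in> - imag_proj f"
    using hyperbolic hyperbolic_iff_notin_imag_proj[OF homogeneous_if_hyperbolic] by blast
  ultimately show "connected_component_set (- imag_proj f) e \<subseteq> hyp_cone f e"
    using connected_component_subset
    by (intro connected_subset_hyp_cone) (auto simp: connected_connected_component)
qed

end

theorem theorem1p1:
  fixes f :: "'n::finite rpoly"
  assumes "homogeneous f"
  shows "{hyp_cone f e | e. hyperbolic f e} = components (- imag_proj f)"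
proof -
  have "{hyp_cone f e | e. hyperbolic f e}
      = {connected_component_set (- imag_proj f) e | e. e \<in> - imag_proj f}"
    using hyp_cone_eq_connected_component hyperbolic_iff_notin_imag_proj[OF assms] by blast
  also have "\<dots> = components (- imag_proj f)"
    unfolding components_def by blast
  finally show ?thesis .
qed

end
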